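(* Let $(J,\preccurlyeq)$ be a finite upper semilattice and let $F\colon J\to \mathrm{vect}_K$ be a functor such that $\mathrm{supp}(\beta^0F)$ is bounded below in $J$ (so that its meet $\bigwedge \mathrm{supp}(\beta^0 F)$ exists). Then for every $d\geq 1$, \[ \langle \mathrm{supp}(\beta^{d+1}F)\rangle \subseteq \langle \mathrm{supp}(\beta^{d}F)\rangle, \] that is, $\cdots\subseteq\langle \mathrm{supp}(\beta^{3}F)\rangle\subseteq\langle \mathrm{supp}(\beta^{2}F)\rangle\subseteq\langle \mathrm{supp}(\beta^{1}F)\rangle$.
   Context: $K$ is a field and $\mathrm{vect}_K$ is the category of finite-dimensional $K$-vector spaces; $\mathrm{Fun}(J,\mathrm{vect}_K)$ is the abelian category of functors $J\to\mathrm{vect}_K$ with natural transformations as morphisms. For $a\in J$, $K(a,-)\colon J\to\mathrm{vect}_K$ is the functor with $K(a,b)=K$ if $a\preccurlyeq b$ and $0$ otherwise, with identity transition maps between nonzero values (free on one generator in degree $a$). Every functor $F\colon J\to\mathrm{vect}_K$ has a minimal projective resolution $\cdots\to C_1\to C_0\to F\to 0$ (each $C_d\to\ker(C_{d-1}\to C_{d-2})$ a projective cover, $C_{-1}=F$, $C_{-2}=0$), unique up to isomorphism, with $C_d\cong\bigoplus_{a\in J}K(a,-)^{\beta^dF(a)}$ for uniquely determined numbers; the function $\beta^dF\colon J\to\mathbb N$ is the $d$-th Betti diagram of $F$, and $\mathrm{supp}(\beta^dF)=\{a\in J\mid \beta^dF(a)\neq0\}$. An upper semilattice is a poset in which every nonempty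 subset has a join $\bigvee$. For $S\subseteq J$, $\langle S\rangle:=\{\bigvee T\mid T\neq\varnothing,\ T\subseteq S\}$ is the smallest subset containing $S$ closed under joins of nonempty subsets. *)

theory Defs
  imports "Jordan_Normal_Form.Matrix" "HOL-Library.Multiset"
begin

text \<open>
  Functors J -> vect_K, for a finite poset J, are encoded concretely (up to isomorphism)
  as pairs (dimension function, transition matrices): the value at a is K^(dim a) and the
  transition map a -> b (for a <= b) is the matrix M a b.
\<close>

type_synonym ('j, 'k) rep = "('j \<Rightarrow> nat) \<times> ('j \<Rightarrow> 'j \<Rightarrow> 'k mat)"

definition rdim :: "('j, 'k) rep \<Rightarrow> 'j \<Rightarrow> nat" where
  "rdim F = fst F"

definition rmap :: "('j, 'k) rep \<Rightarrow> 'j \<Rightarrow> 'j \<Rightarrow> 'k mat" where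
  "rmap F = snd F"

definition is_rep :: "('j::order, 'k::field) rep \<Rightarrow> bool" where
  "is_rep F \<longleftrightarrow>
     (\<forall>a b. a \<le> b \<longrightarrow> rmap F a b \<in> carrier_mat (rdim F b) (rdim F a)) \<and>
     (\<forall>a. rmap F a a = 1\<^sub>m (rdim F a)) \<and>
     (\<forall>a b c. a \<le> b \<longrightarrow> b \<le> c \<longrightarrow> rmap F b c * rmap F a b = rmap F a c)"

definition nat_trans :: "('j::order, 'k::field) rep \<Rightarrow> ('j, 'k) rep \<Rightarrow> ('j \<Rightarrow> 'k mat) \<Rightarrow> bool" where
  "nat_trans F G phi \<longleftrightarrow>
     (\<forall>a. phi a \<in> carrier_mat (rdim G a) (rdim F a)) \<and>
     (\<forall>a b. a \<le> b \<longrightarrow> rmap G a b * phi a = phi b * rmap F a b)"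

definition ker_at :: "('j, 'k::field) rep \<Rightarrow> ('j, 'k) rep \<Rightarrow> ('j \<Rightarrow> 'k mat) \<Rightarrow> 'j \<Rightarrow> 'k vec set" where
  "ker_at F G phi a = {v \<in> carrier_vec (rdim F a). phi a *\<^sub>v v = 0\<^sub>v (rdim G a)}"

definition im_at :: "('j, 'k::field) rep \<Rightarrow> ('j \<Rightarrow> 'k mat) \<Rightarrow> 'j \<Rightarrow> 'k vec set" where
  "im_at F phi a = (\<lambda>v. phi a *\<^sub>v v) ` carrier_vec (rdim F a)"

definition subrep :: "('j::order, 'k::field) rep \<Rightarrow> ('j \<Rightarrow> 'k vec set) \<Rightarrow> bool" where
  "subrep F N \<longleftrightarrow>
     (\<forall>a. N a \<subseteq> carrier_vec (rdim F a) \<and> 0\<^sub>v (rdim F a) \<in> N a \<and>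
          (\<forall>u\<in>N a. \<forall>w\<in>N a. u + w \<in> N a) \<and> (\<forall>c. \<forall>u\<in>N a. c \<cdot>\<^sub>v u \<in> N a)) \<and>
     (\<forall>a b. a \<le> b \<longrightarrow> (\<forall>v\<in>N a. rmap F a b *\<^sub>v v \<in> N b))"

text \<open>The kernel of phi : P => G is superfluous in P: every subfunctor N with N + ker phi = P
  is all of P. A morphism out of a projective P onto M with superfluous kernel is a
  projective cover of M.\<close>
definition superfluous_ker :: "('j::order, 'k::field) rep \<Rightarrow> ('j, 'k) rep \<Rightarrow> ('j \<Rightarrow> 'k mat) \<Rightarrow> bool" where
  "superfluous_ker P G phi \<longleftrightarrow>
     (\<forall>N. subrep P N \<and>
          (\<forall>a. {u + w | u w. u \<in> N a \<and> w \<in> ker_at P G phi a} = carrier_vec (rdim P a))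
        \<longrightarrow> (\<forall>a. N a = carrier_vec (rdim P a)))"

text \<open>The free functor on a list of generators gs: it is (isomorphic to) the direct sum of
  K(gs!i,-) over i < length gs, i.e. the sum over a of K(a,-)^(count gs a).\<close>
definition gens_le :: "'j::order list \<Rightarrow> 'j \<Rightarrow> nat list" where
  "gens_le gs x = filter (\<lambda>i. gs ! i \<le> x) [0..<length gs]"

definition free_rep :: "'j::order list \<Rightarrow> ('j, 'k::field) rep" where
  "free_rep gs =
     (\<lambda>x. length (gens_le gs x),
      \<lambda>x y. mat (length (gens_le gs y)) (length (gens_le gs x))
               (\<lambda>(r, c). if gens_le gs y ! r = gens_le gs x ! c then 1 else 0))"

text \<open>A minimal projective resolution ... -> C_2 -> C_1 -> C_0 -> F -> 0, where
  dd d : C_(d+1) => C_d and eps : C_0 => F,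
  with C_d = free_rep (gs d). Each C_d -> ker(C_(d-1) -> C_(d-2)) is a projective cover
  (C_(-1) = F, C_(-2) = 0): surjective onto that kernel (exactness) with superfluous kernel.\<close>
definition min_proj_res ::
  "('j::order, 'k::field) rep \<Rightarrow> (nat \<Rightarrow> 'j list) \<Rightarrow> ('j \<Rightarrow> 'k mat) \<Rightarrow> (nat \<Rightarrow> 'j \<Rightarrow> 'k mat) \<Rightarrow> bool"
  where
  "min_proj_res F gs eps dd \<longleftrightarrow>
     nat_trans (free_rep (gs 0)) F eps \<and>
     (\<forall>d. nat_trans (free_rep (gs (Suc d))) (free_rep (gs d)) (dd d)) \<and>
     (\<forall>a. im_at (free_rep (gs 0)) eps a = carrier_vec (rdim F a)) \<and>
     (\<forall>a. im_at (free_rep (gs 1)) (dd 0) a = ker_at (free_rep (gs 0)) F eps a) \<and>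
     (\<forall>d a. im_at (free_rep (gs (Suc (Suc d)))) (dd (Suc d)) a
             = ker_at (free_rep (gs (Suc d))) (free_rep (gs d)) (dd d) a) \<and>
     superfluous_ker (free_rep (gs 0)) F eps \<and>
     (\<forall>d. superfluous_ker (free_rep (gs (Suc d))) (free_rep (gs d)) (dd d))"

text \<open>Betti diagram: C_d is the sum over a of K(a,-)^(beta d a).\<close>
definition betti :: "(nat \<Rightarrow> 'j list) \<Rightarrow> nat \<Rightarrow> 'j \<Rightarrow> nat" where
  "betti gs d a = count (mset (gs d)) a"

definition supp :: "('j \<Rightarrow> nat) \<Rightarrow> 'j set" where
  "supp f = {a. f a \<noteq> 0}"

definition join_closure :: "'j::semilattice_sup set \<Rightarrow> 'j set" where
  "join_closure S = {Sup_fin T | T. T \<noteq> {} \<and> T \<subseteq> S}"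

end

theory Submission
  imports Defs
begin

text \<open>
  Let a be a generator of C_(d+1) that is not a join of generators of C_d. Then the generators
  of C_d below a either do not exist or have a join y < a, so the transition C_d(y) -> C_d(a)
  is an isomorphism, while C_(d-1)(y) -> C_(d-1)(a) is injective. By exactness, the image in
  C_d(a) of the basis vector e of a is therefore already the image of a vector u of C_(d+1)
  pushed forward from y, and u has no component along e. So e - u is a kernel vector with
  coefficient 1 at e; together with the subfunctor of vectors without component along e it
  spans C_(d+1), contradicting minimality (the kernel is superfluous). Hence every generator
  of C_(d+1) lies in the join closure of the generators of C_d, and then so does every join
  of them.
\<close>

lemma join_closure_subsetI:
  fixes S S' :: "'j::{finite, semilattice_sup} set"
  assumes "S' \<subseteq> join_closure S"
  shows "join_closure S' \<subseteq> join_closure S"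
proof
  fix z assume "z \<in> join_closure S'"
  then obtain T where T: "z = Sup_fin T" "T \<noteq> {}" "T \<subseteq> S'" by (auto simp: join_closure_def)
  have "\<forall>t\<in>T. \<exists>U. t = Sup_fin U \<and> U \<noteq> {} \<and> U \<subseteq> S"
    using T(3) assms by (auto simp: join_closure_def)
  then obtain U where U: "\<And>t. t \<in> T \<Longrightarrow> t = Sup_fin (U t) \<and> U t \<noteq> {} \<and> U t \<subseteq> S"
    by metis
  define V where "V = (\<Union>t\<in>T. U t)"
  have V: "V \<noteq> {}" "V \<subseteq> S" using T(2) U by (auto simp: V_def)
  have "Sup_fin T = Sup_fin V"
  proof (rule antisym)
    show "Sup_fin T \<le> Sup_fin V"
    proof (rule Sup_fin.boundedI)
      fix t assume t: "t \<in> T"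
      have "Sup_fin (U t) \<le> Sup_fin V"
        by (rule Sup_fin.boundedI) (use U[OF t] t in \<open>auto simp: V_def intro: Sup_fin.coboundedI\<close>)
      then show "t \<le> Sup_fin V" using U[OF t] by simp
    qed (use T(2) in auto)
    show "Sup_fin V \<le> Sup_fin T"
    proof (rule Sup_fin.boundedI)
      fix s assume "s \<in> V"
      then obtain t where t: "t \<in> T" "s \<in> U t" by (auto simp: V_def)
      then have "s \<le> Sup_fin (U t)" by (intro Sup_fin.coboundedI) auto
      also have "\<dots> \<le> Sup_fin T" using U[OF t(1)] t(1) by (auto intro: Sup_fin.coboundedI)
      finally show "s \<le> Sup_fin T" .
    qed (use V in auto)
  qed
  then show "z \<in> join_closure S" using T(1) V by (auto simp: join_closure_def)
qed

lemma not_in_join_closure_below: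
  fixes S :: "'j::semilattice_sup set"
  assumes "finite S" "a \<notin> join_closure S"
  obtains "\<forall>b\<in>S. \<not> b \<le> a"
  | y where "y < a" "\<forall>b\<in>S. b \<le> y \<longleftrightarrow> b \<le> a"
proof (cases "\<exists>b\<in>S. b \<le> a")
  case True
  define y where "y = Sup_fin {b \<in> S. b \<le> a}"
  have B: "finite {b \<in> S. b \<le> a}" "{b \<in> S. b \<le> a} \<noteq> {}" using assms(1) True by auto
  have "y \<le> a" unfolding y_def by (rule Sup_fin.boundedI[OF B]) auto
  moreover have "y \<in> join_closure S" using B(2) unfolding join_closure_def y_def by blast
  then have "y \<noteq> a" using assms(2) by metis
  moreover have "b \<le> y" if "b \<in> S" "b \<le> a" for b
    unfolding y_def using Sup_fin.coboundedI[OF B(1)] that by blast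
  ultimately have "y < a" "\<forall>b\<in>S. b \<le> y \<longleftrightarrow> b \<le> a"
    by (auto intro: order_trans)
  then show ?thesis by (rule that(2))
next
  case False
  then show ?thesis by (intro that(1)) blast
qed

text \<open>
  The basis of free_rep gs at x is indexed by the list G = gens_le gs x of generators below x;
  gen_coord G v j is the coefficient of generator j in v (zero if j does not occur in G).
\<close>
definition gen_coord :: "nat list \<Rightarrow> 'k::field vec \<Rightarrow> nat \<Rightarrow> 'k" where
  "gen_coord G v j = (\<Sum>p<length G. if G ! p = j then v $ p else 0)"

lemma gen_coord_nth:
  assumes "distinct G" "p < length G"
  shows "gen_coord G v (G ! p) = v $ p"
proof -
  have "gen_coord G v (G ! p) = (\<Sum>q<length G. if q = p then v $ q else 0)"
    unfolding gen_coord_def by (rule sum.cong) (use assms nth_eq_iff_index_eq in auto)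
  also have "\<dots> = v $ p" using assms by simp
  finally show ?thesis .
qed

lemma gen_coord_notin: "j \<notin> set G \<Longrightarrow> gen_coord G v j = 0"
  unfolding gen_coord_def by (rule sum.neutral) auto

lemma gen_coord_eqI:
  assumes "distinct G" "v \<in> carrier_vec (length G)" "w \<in> carrier_vec (length G)"
    and "\<And>j. j \<in> set G \<Longrightarrow> gen_coord G v j = gen_coord G w j"
  shows "v = w"
proof (rule eq_vecI)
  fix p assume "p < dim_vec w"
  then have p: "p < length G" using assms(3) by simp
  have "v $ p = gen_coord G v (G ! p)" by (rule gen_coord_nth[OF assms(1) p, symmetric])
  also have "\<dots> = gen_coord G w (G ! p)" using assms(4) p by simp
  also have "\<dots> = w $ p" by (rule gen_coord_nth[OF assms(1) p])
  finally show "v $ p = w $ p" .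
qed (use assms in simp)

lemma gen_coord_add:
  "v \<in> carrier_vec (length G) \<Longrightarrow> w \<in> carrier_vec (length G) \<Longrightarrow>
   gen_coord G (v + w) j = gen_coord G v j + gen_coord G w j"
  unfolding gen_coord_def by (auto simp: sum.distrib[symmetric] intro!: sum.cong)

lemma gen_coord_diff:
  "v \<in> carrier_vec (length G) \<Longrightarrow> w \<in> carrier_vec (length G) \<Longrightarrow>
   gen_coord G (v - w) j = gen_coord G v j - gen_coord G w j"
  unfolding gen_coord_def by (auto simp: sum_subtractf[symmetric] intro!: sum.cong)

lemma gen_coord_smult:
  "v \<in> carrier_vec (length G) \<Longrightarrow> gen_coord G (c \<cdot>\<^sub>v v) j = c * gen_coord G v j"
  unfolding gen_coord_def by (auto simp: sum_distrib_left intro!: sum.cong)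

lemma gen_coord_zero [simp]: "gen_coord G (0\<^sub>v (length G)) j = 0"
  unfolding gen_coord_def by (auto intro!: sum.neutral)

lemma distinct_gens_le [simp]: "distinct (gens_le gs x)"
  by (simp add: gens_le_def)

lemma set_gens_le: "set (gens_le gs x) = {i. i < length gs \<and> gs ! i \<le> x}"
  by (auto simp: gens_le_def)

lemma rdim_free_rep [simp]:
  "rdim (free_rep gs :: ('j::order, 'k::field) rep) x = length (gens_le gs x)"
  by (simp add: rdim_def free_rep_def)

lemma rmap_free_rep:
  "rmap (free_rep gs :: ('j::order, 'k::field) rep) x y =
     mat (length (gens_le gs y)) (length (gens_le gs x))
       (\<lambda>(r, c). if gens_le gs y ! r = gens_le gs x ! c then 1 else 0)"
  by (simp add: rmap_def free_rep_def)

lemma rmap_free_rep_carrier [simp]: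
  "rmap (free_rep gs :: ('j::order, 'k::field) rep) x y
     \<in> carrier_mat (length (gens_le gs y)) (length (gens_le gs x))"
  by (simp add: rmap_free_rep)

lemma free_rep_transition_carrier [simp]:
  "v \<in> carrier_vec (length (gens_le gs x)) \<Longrightarrow>
   rmap (free_rep gs :: ('j::order, 'k::field) rep) x y *\<^sub>v v
     \<in> carrier_vec (length (gens_le gs y))"
  using rmap_free_rep_carrier by (rule mult_mat_vec_carrier)

lemma free_rep_transition_zero [simp]:
  "rmap (free_rep gs :: ('j::order, 'k::field) rep) x y *\<^sub>v 0\<^sub>v (length (gens_le gs x))
     = 0\<^sub>v (length (gens_le gs y))"
  by (rule eq_vecI) (auto simp: rmap_free_rep scalar_prod_def)

lemma gen_coord_free_rep_transition:
  fixes v :: "'k::field vec"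
  assumes "x \<le> y" "v \<in> carrier_vec (length (gens_le gs x))"
  shows "gen_coord (gens_le gs y) (rmap (free_rep gs) x y *\<^sub>v v) j = gen_coord (gens_le gs x) v j"
proof (cases "j \<in> set (gens_le gs y)")
  case True
  then obtain p where p: "p < length (gens_le gs y)" "gens_le gs y ! p = j"
    by (metis in_set_conv_nth)
  have "gen_coord (gens_le gs y) (rmap (free_rep gs) x y *\<^sub>v v) j
      = (rmap (free_rep gs) x y *\<^sub>v v) $ p"
    using gen_coord_nth[OF distinct_gens_le p(1)] p(2) by simp
  also have "\<dots> = gen_coord (gens_le gs x) v j"
    using p assms(2) unfolding gen_coord_def rmap_free_rep
    by (auto simp: scalar_prod_def intro!: sum.cong)
  finally show ?thesis .
next
  case False
  then have "j \<notin> set (gens_le gs x)"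
    using assms(1) by (auto simp: set_gens_le intro: order_trans)
  with False show ?thesis by (simp add: gen_coord_notin)
qed

lemma free_rep_transition_inj:
  fixes v :: "'k::field vec"
  assumes "x \<le> y" "v \<in> carrier_vec (length (gens_le gs x))"
    and "rmap (free_rep gs) x y *\<^sub>v v = 0\<^sub>v (length (gens_le gs y))"
  shows "v = 0\<^sub>v (length (gens_le gs x))"
proof (rule gen_coord_eqI)
  fix j
  show "gen_coord (gens_le gs x) v j = gen_coord (gens_le gs x) (0\<^sub>v (length (gens_le gs x))) j"
    using gen_coord_free_rep_transition[OF assms(1,2), of j] assms(3) by simp
qed (use assms in auto)

lemma free_rep_transition_surj:
  fixes w :: "'k::field vec"
  assumes "x \<le> y" "set (gens_le gs x) = set (gens_le gs y)"
    and "w \<in> carrier_vec (length (gens_le gs y))"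
  obtains v where "v \<in> carrier_vec (length (gens_le gs x))" "rmap (free_rep gs) x y *\<^sub>v v = w"
proof
  define v
    where "v = vec (length (gens_le gs x)) (\<lambda>p. gen_coord (gens_le gs y) w (gens_le gs x ! p))"
  show v: "v \<in> carrier_vec (length (gens_le gs x))" by (simp add: v_def)
  show "rmap (free_rep gs) x y *\<^sub>v v = w"
  proof (rule gen_coord_eqI)
    fix j assume "j \<in> set (gens_le gs y)"
    then obtain p where p: "p < length (gens_le gs x)" "gens_le gs x ! p = j"
      using assms(2) by (metis in_set_conv_nth)
    have "gen_coord (gens_le gs y) (rmap (free_rep gs) x y *\<^sub>v v) j = gen_coord (gens_le gs x) v j"
      by (rule gen_coord_free_rep_transition[OF assms(1) v])
    also have "\<dots> = v $ p" using gen_coord_nth[OF distinct_gens_le p(1)] p(2) by simp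
    also have "\<dots> = gen_coord (gens_le gs y) w j" using p by (simp add: v_def)
    finally show "gen_coord (gens_le gs y) (rmap (free_rep gs) x y *\<^sub>v v) j
      = gen_coord (gens_le gs y) w j" .
  qed (use v assms(3) in auto)
qed

lemma nat_trans_carrier: "nat_trans F G phi \<Longrightarrow> phi a \<in> carrier_mat (rdim G a) (rdim F a)"
  by (simp add: nat_trans_def)

lemma ker_at_smult:
  assumes "nat_trans F G phi" "k \<in> ker_at F G phi a"
  shows "c \<cdot>\<^sub>v k \<in> ker_at F G phi a"
  using assms mult_mat_vec[OF nat_trans_carrier[OF assms(1)]] by (auto simp: ker_at_def)

lemma nat_trans_free_rep_mult_vec:
  fixes f :: "'j::order \<Rightarrow> 'k::field mat"
  assumes f: "nat_trans (free_rep gP) (free_rep gQ) f" and "x \<le> y"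
    and v: "v \<in> carrier_vec (length (gens_le gP x))"
  shows "rmap (free_rep gQ) x y *\<^sub>v (f x *\<^sub>v v) = f y *\<^sub>v (rmap (free_rep gP) x y *\<^sub>v v)"
proof -
  have fc: "\<And>x. f x \<in> carrier_mat (length (gens_le gQ x)) (length (gens_le gP x))"
    using nat_trans_carrier[OF f] by simp
  have "rmap (free_rep gQ) x y *\<^sub>v (f x *\<^sub>v v) = (rmap (free_rep gQ) x y * f x) *\<^sub>v v"
    by (rule assoc_mult_mat_vec[symmetric, OF rmap_free_rep_carrier fc v])
  also have "\<dots> = (f y * rmap (free_rep gP) x y) *\<^sub>v v"
    using f \<open>x \<le> y\<close> by (simp add: nat_trans_def)
  also have "\<dots> = f y *\<^sub>v (rmap (free_rep gP) x y *\<^sub>v v)"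
    by (rule assoc_mult_mat_vec[OF fc rmap_free_rep_carrier v])
  finally show ?thesis .
qed

lemma ker_at_free_rep_transition:
  fixes f :: "'j::order \<Rightarrow> 'k::field mat"
  assumes f: "nat_trans (free_rep gP) (free_rep gQ) f" and "a \<le> x"
    and k: "k \<in> ker_at (free_rep gP) (free_rep gQ) f a"
  shows "rmap (free_rep gP) a x *\<^sub>v k \<in> ker_at (free_rep gP) (free_rep gQ) f x"
proof -
  have kc: "k \<in> carrier_vec (length (gens_le gP a))"
    and "f a *\<^sub>v k = 0\<^sub>v (length (gens_le gQ a))"
    using k by (auto simp: ker_at_def)
  then have "f x *\<^sub>v (rmap (free_rep gP) a x *\<^sub>v k) = 0\<^sub>v (length (gens_le gQ x))"
    using nat_trans_free_rep_mult_vec[OF f \<open>a \<le> x\<close> kc] by simp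
  then show ?thesis using kc by (simp add: ker_at_def)
qed

text \<open>
  The hypothesis on gQ makes the transition of free_rep gQ from y to a an isomorphism; since
  the transition of free_rep gR is injective, exactness at a can then be pulled back to y.
\<close>
lemma im_at_from_below:
  fixes f g :: "'j::order \<Rightarrow> 'k::field mat"
  assumes f: "nat_trans (free_rep gP) (free_rep gQ) f"
    and g: "nat_trans (free_rep gQ) (free_rep gR) g"
    and exact: "\<And>x. im_at (free_rep gP) f x = ker_at (free_rep gQ) (free_rep gR) g x"
    and ya: "y \<le> a" "set (gens_le gQ y) = set (gens_le gQ a)"
    and w: "w \<in> im_at (free_rep gP) f a"
  obtains u where "u \<in> carrier_vec (length (gens_le gP y))"
    "w = f a *\<^sub>v (rmap (free_rep gP) y a *\<^sub>v u)"
proof -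
  have wc: "w \<in> carrier_vec (length (gens_le gQ a))"
    and gw: "g a *\<^sub>v w = 0\<^sub>v (length (gens_le gR a))"
    using w exact by (auto simp: ker_at_def)
  obtain w' where w': "w' \<in> carrier_vec (length (gens_le gQ y))"
    "rmap (free_rep gQ) y a *\<^sub>v w' = w"
    using free_rep_transition_surj[OF ya wc] by blast
  have gw'c: "g y *\<^sub>v w' \<in> carrier_vec (length (gens_le gR y))"
    using nat_trans_carrier[OF g] w'(1) by (intro mult_mat_vec_carrier) simp_all
  have "rmap (free_rep gR) y a *\<^sub>v (g y *\<^sub>v w') = 0\<^sub>v (length (gens_le gR a))"
    using nat_trans_free_rep_mult_vec[OF g ya(1) w'(1)] w'(2) gw by simp
  then have "g y *\<^sub>v w' = 0\<^sub>v (length (gens_le gR y))"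
    by (rule free_rep_transition_inj[OF ya(1) gw'c])
  then have "w' \<in> im_at (free_rep gP) f y" using w'(1) exact by (simp add: ker_at_def)
  then obtain u where u: "u \<in> carrier_vec (length (gens_le gP y))" "w' = f y *\<^sub>v u"
    by (auto simp: im_at_def)
  have "w = f a *\<^sub>v (rmap (free_rep gP) y a *\<^sub>v u)"
    using nat_trans_free_rep_mult_vec[OF f ya(1) u(1)] u(2) w'(2) by simp
  with u(1) show thesis by (rule that)
qed

lemma subrep_gen_coord_zero:
  "subrep (free_rep gs :: ('j::order, 'k::field) rep)
     (\<lambda>x. {v \<in> carrier_vec (length (gens_le gs x)). gen_coord (gens_le gs x) v i = 0})"
  unfolding subrep_def
  by (auto simp: gen_coord_add gen_coord_smult gen_coord_free_rep_transition)

lemma ker_at_decompose_gen_coord_zero: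
  fixes f :: "'j::order \<Rightarrow> 'k::field mat"
  assumes f: "nat_trans (free_rep gP) (free_rep gQ) f"
    and k: "k \<in> ker_at (free_rep gP) (free_rep gQ) f (gP ! i)"
    and k_coord: "gen_coord (gens_le gP (gP ! i)) k i \<noteq> 0"
    and v: "v \<in> carrier_vec (length (gens_le gP x))"
  obtains u w where "u \<in> carrier_vec (length (gens_le gP x))" "gen_coord (gens_le gP x) u i = 0"
    "w \<in> ker_at (free_rep gP) (free_rep gQ) f x" "v = u + w"
proof (cases "gP ! i \<le> x")
  case True
  define c where "c = gen_coord (gens_le gP (gP ! i)) k i"
  define w
    where "w = (gen_coord (gens_le gP x) v i / c) \<cdot>\<^sub>v (rmap (free_rep gP) (gP ! i) x *\<^sub>v k)"
  have kc: "k \<in> carrier_vec (length (gens_le gP (gP ! i)))" using k by (simp add: ker_at_def)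
  have w: "w \<in> ker_at (free_rep gP) (free_rep gQ) f x"
    unfolding w_def by (intro ker_at_smult[OF f] ker_at_free_rep_transition[OF f True k])
  then have wc: "w \<in> carrier_vec (length (gens_le gP x))" by (simp add: ker_at_def)
  have "gen_coord (gens_le gP x) w i = gen_coord (gens_le gP x) v i"
    using kc True k_coord by (simp add: w_def gen_coord_smult gen_coord_free_rep_transition c_def)
  then have "gen_coord (gens_le gP x) (v - w) i = 0" using v wc by (simp add: gen_coord_diff)
  show thesis
  proof (rule that[of "v - w" w])
    show "v = (v - w) + w" using v wc by (intro eq_vecI) auto
  qed (use v wc w \<open>gen_coord (gens_le gP x) (v - w) i = 0\<close> in simp_all)
next
  case False
  then have "gen_coord (gens_le gP x) v i = 0" by (simp add: gen_coord_notin set_gens_le)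
  moreover have "0\<^sub>v (length (gens_le gP x)) \<in> ker_at (free_rep gP) (free_rep gQ) f x"
    using nat_trans_carrier[OF f, of x] by (auto simp: ker_at_def)
  ultimately show thesis using that[of v "0\<^sub>v (length (gens_le gP x))"] v by simp
qed

text \<open>
  Otherwise the kernel and the subfunctor of vectors without component along generator i
  would together span free_rep gP.
\<close>
lemma superfluous_ker_gen_coord:
  fixes f :: "'j::order \<Rightarrow> 'k::field mat"
  assumes f: "nat_trans (free_rep gP) (free_rep gQ) f"
    and sf: "superfluous_ker (free_rep gP) (free_rep gQ) f"
    and k: "k \<in> ker_at (free_rep gP) (free_rep gQ) f (gP ! i)"
  shows "gen_coord (gens_le gP (gP ! i)) k i = 0"
proof (rule ccontr)
  define N :: "'j \<Rightarrow> 'k vec set"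
    where "N x = {v \<in> carrier_vec (length (gens_le gP x)). gen_coord (gens_le gP x) v i = 0}" for x
  assume k_coord: "gen_coord (gens_le gP (gP ! i)) k i \<noteq> 0"
  have "{u + w |u w. u \<in> N x \<and> w \<in> ker_at (free_rep gP) (free_rep gQ) f x}
      = carrier_vec (rdim (free_rep gP :: ('j, 'k) rep) x)" for x
  proof (intro subset_antisym subsetI)
    fix v :: "'k vec" assume "v \<in> carrier_vec (rdim (free_rep gP :: ('j, 'k) rep) x)"
    then have v: "v \<in> carrier_vec (length (gens_le gP x))" by simp
    obtain u w where "u \<in> carrier_vec (length (gens_le gP x))"
      "gen_coord (gens_le gP x) u i = 0" "w \<in> ker_at (free_rep gP) (free_rep gQ) f x" "v = u + w"
      by (rule ker_at_decompose_gen_coord_zero[OF f k k_coord v])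
    then show "v \<in> {u + w |u w. u \<in> N x \<and> w \<in> ker_at (free_rep gP) (free_rep gQ) f x}"
      unfolding N_def by blast
  next
    fix v :: "'k vec"
    assume "v \<in> {u + w |u w. u \<in> N x \<and> w \<in> ker_at (free_rep gP) (free_rep gQ) f x}"
    then show "v \<in> carrier_vec (rdim (free_rep gP :: ('j, 'k) rep) x)"
      unfolding N_def ker_at_def by auto
  qed
  with sf have "N (gP ! i) = carrier_vec (rdim (free_rep gP :: ('j, 'k) rep) (gP ! i))"
    using subrep_gen_coord_zero[of gP i] unfolding superfluous_ker_def N_def by blast
  then have "k \<in> N (gP ! i)" using k by (simp add: ker_at_def)
  then show False using k_coord by (simp add: N_def)
qed

lemma im_at_gen_coord_zero_if_not_join:
  fixes f g :: "'j::semilattice_sup \<Rightarrow> 'k::field mat"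
  assumes f: "nat_trans (free_rep gP) (free_rep gQ) f"
    and g: "nat_trans (free_rep gQ) (free_rep gR) g"
    and exact: "\<And>x. im_at (free_rep gP) f x = ker_at (free_rep gQ) (free_rep gR) g x"
    and not_join: "gP ! i \<notin> join_closure (set gQ)"
    and v: "v \<in> carrier_vec (length (gens_le gP (gP ! i)))"
  obtains u where "u \<in> carrier_vec (length (gens_le gP (gP ! i)))"
    "gen_coord (gens_le gP (gP ! i)) u i = 0" "f (gP ! i) *\<^sub>v u = f (gP ! i) *\<^sub>v v"
  using finite_set not_join
proof (rule not_in_join_closure_below)
  define a where "a = gP ! i"
  assume "\<forall>b\<in>set gQ. \<not> b \<le> gP ! i"
  then have "set (gens_le gQ a) = {}" by (auto simp: set_gens_le a_def)
  then have "f a *\<^sub>v v = f a *\<^sub>v 0\<^sub>v (length (gens_le gP a))"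
    using nat_trans_carrier[OF f, of a] by (intro eq_vecI) auto
  then show thesis using that[of "0\<^sub>v (length (gens_le gP a))"] by (simp add: a_def)
next
  define a where "a = gP ! i"
  fix y assume y: "y < gP ! i" "\<forall>b\<in>set gQ. b \<le> y \<longleftrightarrow> b \<le> gP ! i"
  then have ya: "y \<le> a" and same: "set (gens_le gQ y) = set (gens_le gQ a)"
    by (auto simp: set_gens_le a_def)
  have "f a *\<^sub>v v \<in> im_at (free_rep gP) f a" using v by (simp add: im_at_def a_def)
  then obtain u where u: "u \<in> carrier_vec (length (gens_le gP y))"
    "f a *\<^sub>v v = f a *\<^sub>v (rmap (free_rep gP) y a *\<^sub>v u)"
    using im_at_from_below[OF f g exact ya same] by blast
  have "i \<notin> set (gens_le gP y)" using y(1) by (auto simp: set_gens_le)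
  then have "gen_coord (gens_le gP a) (rmap (free_rep gP) y a *\<^sub>v u) i = 0"
    using gen_coord_free_rep_transition[OF ya u(1)] by (simp add: gen_coord_notin)
  with u show thesis by (intro that) (simp_all add: a_def)
qed

lemma ker_at_gen_coord_one_if_not_join:
  fixes f g :: "'j::semilattice_sup \<Rightarrow> 'k::field mat"
  assumes f: "nat_trans (free_rep gP) (free_rep gQ) f"
    and g: "nat_trans (free_rep gQ) (free_rep gR) g"
    and exact: "\<And>x. im_at (free_rep gP) f x = ker_at (free_rep gQ) (free_rep gR) g x"
    and i: "i < length gP" and not_join: "gP ! i \<notin> join_closure (set gQ)"
  obtains k where "k \<in> ker_at (free_rep gP) (free_rep gQ) f (gP ! i)"
    "gen_coord (gens_le gP (gP ! i)) k i = 1"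
proof -
  define a where "a = gP ! i"
  have fc: "f a \<in> carrier_mat (length (gens_le gQ a)) (length (gens_le gP a))"
    using nat_trans_carrier[OF f] by simp
  have "i \<in> set (gens_le gP a)" using i by (simp add: set_gens_le a_def)
  then obtain p where p: "p < length (gens_le gP a)" "gens_le gP a ! p = i"
    by (metis in_set_conv_nth)
  define e :: "'k vec" where "e = unit_vec (length (gens_le gP a)) p"
  have ec: "e \<in> carrier_vec (length (gens_le gP a))" by (simp add: e_def)
  have e1: "gen_coord (gens_le gP a) e i = 1"
    using gen_coord_nth[OF distinct_gens_le p(1), of e] p by (simp add: e_def)
  obtain u where uc: "u \<in> carrier_vec (length (gens_le gP a))"
    and u0: "gen_coord (gens_le gP a) u i = 0" and fu: "f a *\<^sub>v u = f a *\<^sub>v e"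
    using im_at_gen_coord_zero_if_not_join[OF f g exact not_join] ec unfolding a_def by blast
  have "e - u \<in> ker_at (free_rep gP) (free_rep gQ) f a"
    using ec uc fu mult_minus_distrib_mat_vec[OF fc ec uc] fc by (simp add: ker_at_def)
  moreover have "gen_coord (gens_le gP a) (e - u) i = 1"
    using e1 u0 ec uc by (simp add: gen_coord_diff)
  ultimately show thesis by (intro that) (simp_all add: a_def)
qed

lemma generator_in_join_closure:
  fixes f g :: "'j::semilattice_sup \<Rightarrow> 'k::field mat"
  assumes f: "nat_trans (free_rep gP) (free_rep gQ) f"
    and g: "nat_trans (free_rep gQ) (free_rep gR) g"
    and exact: "\<And>x. im_at (free_rep gP) f x = ker_at (free_rep gQ) (free_rep gR) g x"
    and sf: "superfluous_ker (free_rep gP) (free_rep gQ) f"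
  shows "set gP \<subseteq> join_closure (set gQ)"
proof
  fix b assume "b \<in> set gP"
  then obtain i where i: "i < length gP" "b = gP ! i" by (metis in_set_conv_nth)
  show "b \<in> join_closure (set gQ)"
  proof (rule ccontr)
    assume "b \<notin> join_closure (set gQ)"
    then obtain k where "k \<in> ker_at (free_rep gP) (free_rep gQ) f (gP ! i)"
      "gen_coord (gens_le gP (gP ! i)) k i = 1"
      using ker_at_gen_coord_one_if_not_join[OF f g exact i(1)] i(2) by blast
    then show False using superfluous_ker_gen_coord[OF f sf] by fastforce
  qed
qed

lemma supp_betti: "supp (betti gs d) = set (gs d)"
  by (auto simp: supp_def betti_def)

theorem corollary4p2:
  fixes F :: "('j::{finite, semilattice_sup}, 'k::field) rep"
    and gs :: "nat \<Rightarrow> 'j list"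
    and eps :: "'j \<Rightarrow> 'k mat"
    and dd :: "nat \<Rightarrow> 'j \<Rightarrow> 'k mat"
  assumes "is_rep F"
    and "min_proj_res F gs eps dd"
    and "\<exists>m. \<forall>a \<in> supp (betti gs 0). m \<le> a"
    and "d \<ge> 1"
  shows "join_closure (supp (betti gs (Suc d))) \<subseteq> join_closure (supp (betti gs d))"
proof -
  \<comment> \<open>For d \<ge> 1 the maps C_(d+1) -> C_d -> C_(d-1) are maps between free functors.\<close>
  obtain c where d: "d = Suc c" using \<open>d \<ge> 1\<close> by (cases d) auto
  have "set (gs (Suc d)) \<subseteq> join_closure (set (gs d))"
    unfolding d using assms(2) unfolding min_proj_res_def
    by (intro generator_in_join_closure[where gR = "gs c" and f = "dd (Suc c)" and g = "dd c"]) blast+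
  then show ?thesis unfolding supp_betti by (rule join_closure_subsetI)
qed

end
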